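(* Let $f:X\to Y$ be a surjective continuous mapping with $X$ locally Menger. If $f$ is weakly perfect, or if $f$ is bi-quotient, then $Y$ is locally Menger.
   Context: A space $X$ is Menger if for each sequence $(\mathcal{U}_n)$ of open covers of $X$ there is a sequence $(\mathcal{V}_n)$ with each $\mathcal{V}_n$ a finite subset of $\mathcal{U}_n$ and $\bigcup_{n}\bigcup\mathcal{V}_n=X$. A space $X$ is locally Menger if for each $x\in X$ there exist an open set $U$ and a Menger subspace $Y$ of $X$ with $x\in U\subseteq Y$. A surjective continuous map $f:X\to Y$ is weakly perfect if $f$ is closed and $f^{-1}(y)$ is Lindelöf for every $y\in Y$. A surjective continuous map $f:X\to Y$ is bi-quotient if whenever $y\in Y$ and $\mathcal{U}$ is a cover of $f^{-1}(y)$ by open subsets of $X$, there are finitely many $U\in\mathcal{U}$ whose images $f(U)$ cover some open set of $Y$ containing $y$. *)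

theory Defs
  imports "HOL-Analysis.Analysis"
begin

definition open_cover :: "'a topology \<Rightarrow> 'a set set \<Rightarrow> bool" where
  "open_cover T \<U> \<longleftrightarrow> (\<forall>U\<in>\<U>. openin T U) \<and> topspace T \<subseteq> \<Union>\<U>"

definition Menger_space :: "'a topology \<Rightarrow> bool" where
  "Menger_space T \<longleftrightarrow>
     (\<forall>\<U> :: nat \<Rightarrow> 'a set set. (\<forall>n. open_cover T (\<U> n)) \<longrightarrow>
        (\<exists>\<V> :: nat \<Rightarrow> 'a set set. (\<forall>n. finite (\<V> n) \<and> \<V> n \<subseteq> \<U> n) \<and>
            (\<Union>n. \<Union>(\<V> n)) = topspace T))"

definition locally_Menger :: "'a topology \<Rightarrow> bool" where
  "locally_Menger X \<longleftrightarrow>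
     (\<forall>x\<in>topspace X. \<exists>U Y. openin X U \<and> Y \<subseteq> topspace X \<and>
        Menger_space (subtopology X Y) \<and> x \<in> U \<and> U \<subseteq> Y)"

definition weakly_perfect_map :: "'a topology \<Rightarrow> 'b topology \<Rightarrow> ('a \<Rightarrow> 'b) \<Rightarrow> bool" where
  "weakly_perfect_map X Y f \<longleftrightarrow>
     continuous_map X Y f \<and> f ` topspace X = topspace Y \<and> closed_map X Y f \<and>
     (\<forall>y\<in>topspace Y. Lindelof_space (subtopology X {x \<in> topspace X. f x = y}))"

definition biquotient_map :: "'a topology \<Rightarrow> 'b topology \<Rightarrow> ('a \<Rightarrow> 'b) \<Rightarrow> bool" where
  "biquotient_map X Y f \<longleftrightarrow>
     continuous_map X Y f \<and> f ` topspace X = topspace Y \<and>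
     (\<forall>y\<in>topspace Y. \<forall>\<U>. (\<forall>U\<in>\<U>. openin X U) \<and>
          {x \<in> topspace X. f x = y} \<subseteq> \<Union>\<U> \<longrightarrow>
        (\<exists>\<F> V. finite \<F> \<and> \<F> \<subseteq> \<U> \<and> openin Y V \<and> y \<in> V \<and>
              V \<subseteq> (\<Union>U\<in>\<F>. f ` U)))"

end

(*
  Choose for every x a Menger set K x containing an open neighbourhood U x of x. Continuous
  images and countable unions of Menger subsets are Menger, so it suffices that each y in Y has
  a neighbourhood covered by the images of countably many U x. For a weakly perfect map the
  fibre over y is Lindelof, hence covered by countably many U x, and since f is closed some
  neighbourhood of y has its whole preimage inside their union. For a bi-quotient map finitely
  many U x already suffice, by definition.
*)

theory Submission
  imports Defs
begin

text \<open>The Menger property of a subset, stated with open sets of the ambient space in the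
  style of \<^const>\<open>compactin\<close>; it agrees with the Menger property of the subspace
  (lemma Menger_in_subspace) and is easier to transport along maps and unions.\<close>

definition Menger_in :: "'a topology \<Rightarrow> 'a set \<Rightarrow> bool" where
  "Menger_in T S \<longleftrightarrow> S \<subseteq> topspace T \<and>
     (\<forall>\<U> :: nat \<Rightarrow> 'a set set. (\<forall>n. (\<forall>U\<in>\<U> n. openin T U) \<and> S \<subseteq> \<Union>(\<U> n)) \<longrightarrow>
        (\<exists>\<V>. (\<forall>n. finite (\<V> n) \<and> \<V> n \<subseteq> \<U> n) \<and> S \<subseteq> (\<Union>n. \<Union>(\<V> n))))"

lemma Menger_in_subset: "Menger_in T S \<Longrightarrow> S \<subseteq> topspace T"
  by (simp add: Menger_in_def)

lemma Menger_inD: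
  fixes \<U> :: "nat \<Rightarrow> 'a set set"
  assumes "Menger_in T S" "\<And>n U. U \<in> \<U> n \<Longrightarrow> openin T U" "\<And>n. S \<subseteq> \<Union>(\<U> n)"
  shows "\<exists>\<V>. (\<forall>n. finite (\<V> n) \<and> \<V> n \<subseteq> \<U> n) \<and> S \<subseteq> (\<Union>n. \<Union>(\<V> n))"
proof -
  have "(\<forall>n. (\<forall>U\<in>\<U> n. openin T U) \<and> S \<subseteq> \<Union>(\<U> n)) \<longrightarrow>
      (\<exists>\<V>. (\<forall>n. finite (\<V> n) \<and> \<V> n \<subseteq> \<U> n) \<and> S \<subseteq> (\<Union>n. \<Union>(\<V> n)))"
    using assms(1) unfolding Menger_in_def by (elim conjE spec)
  then show ?thesis
    using assms(2,3) by blast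
qed

lemma Menger_spaceD:
  fixes \<U> :: "nat \<Rightarrow> 'a set set"
  assumes "Menger_space T" "\<And>n. open_cover T (\<U> n)"
  shows "\<exists>\<V>. (\<forall>n. finite (\<V> n) \<and> \<V> n \<subseteq> \<U> n) \<and> (\<Union>n. \<Union>(\<V> n)) = topspace T"
proof -
  have "(\<forall>n. open_cover T (\<U> n)) \<longrightarrow>
      (\<exists>\<V>. (\<forall>n. finite (\<V> n) \<and> \<V> n \<subseteq> \<U> n) \<and> (\<Union>n. \<Union>(\<V> n)) = topspace T)"
    using assms(1) unfolding Menger_space_def by (rule spec)
  then show ?thesis
    using assms(2) by blast
qed

lemma finite_subset_image_seq:
  fixes \<W> :: "nat \<Rightarrow> 'b set"
  assumes "\<forall>n. finite (\<W> n) \<and> \<W> n \<subseteq> g n ` \<U> n"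
  shows "\<exists>\<V>. \<forall>n. \<V> n \<subseteq> \<U> n \<and> finite (\<V> n) \<and> \<W> n = g n ` \<V> n"
proof -
  have "\<forall>n. \<exists>C. C \<subseteq> \<U> n \<and> finite C \<and> \<W> n = g n ` C"
    using assms by (meson finite_subset_image)
  then show ?thesis
    by metis
qed

lemma Menger_in_if_Menger_space_subtopology:
  assumes S: "S \<subseteq> topspace T" and M: "Menger_space (subtopology T S)"
  shows "Menger_in T S"
  unfolding Menger_in_def
proof (intro conjI allI impI S)
  have top_S: "topspace (subtopology T S) = S"
    using S by (simp add: Int_absorb1)
  fix \<U> :: "nat \<Rightarrow> 'a set set"
  assume \<U>: "\<forall>n. (\<forall>U\<in>\<U> n. openin T U) \<and> S \<subseteq> \<Union>(\<U> n)"
  have "open_cover (subtopology T S) ((\<lambda>U. U \<inter> S) ` \<U> n)" for n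
    unfolding open_cover_def top_S
  proof (intro conjI ballI)
    fix V assume "V \<in> (\<lambda>U. U \<inter> S) ` \<U> n"
    then obtain U where "U \<in> \<U> n" "V = U \<inter> S"
      by blast
    then show "openin (subtopology T S) V"
      using \<U> by (simp add: openin_subtopology_Int)
  next
    show "S \<subseteq> \<Union>((\<lambda>U. U \<inter> S) ` \<U> n)"
      using \<U> by blast
  qed
  then have "\<exists>\<W>. (\<forall>n. finite (\<W> n) \<and> \<W> n \<subseteq> (\<lambda>U. U \<inter> S) ` \<U> n) \<and>
      (\<Union>n. \<Union>(\<W> n)) = topspace (subtopology T S)"
    by (intro Menger_spaceD[OF M])
  then obtain \<W> where \<W>: "\<forall>n. finite (\<W> n) \<and> \<W> n \<subseteq> (\<lambda>U. U \<inter> S) ` \<U> n"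
    and "(\<Union>n. \<Union>(\<W> n)) = topspace (subtopology T S)"
    by (elim exE conjE)
  then have cov: "(\<Union>n. \<Union>(\<W> n)) = S"
    by (simp only: top_S)
  obtain \<V> where \<V>: "\<forall>n. \<V> n \<subseteq> \<U> n \<and> finite (\<V> n) \<and> \<W> n = (\<lambda>U. U \<inter> S) ` \<V> n"
    using finite_subset_image_seq[OF \<W>] by blast
  have "S \<subseteq> (\<Union>n. \<Union>(\<V> n))"
  proof
    fix x assume "x \<in> S"
    then have "x \<in> (\<Union>n. \<Union>(\<W> n))"
      by (simp only: cov)
    then obtain n W where "W \<in> \<W> n" "x \<in> W"
      by blast
    then show "x \<in> (\<Union>n. \<Union>(\<V> n))"
      using \<V> by auto
  qed
  with \<V> show "\<exists>\<V>. (\<forall>n. finite (\<V> n) \<and> \<V> n \<subseteq> \<U> n) \<and> S \<subseteq> (\<Union>n. \<Union>(\<V> n))"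
    by blast
qed

lemma openin_subtopology_seq_lift:
  fixes \<U> :: "nat \<Rightarrow> 'a set set"
  assumes "\<And>n U. U \<in> \<U> n \<Longrightarrow> openin (subtopology T S) U"
  shows "\<exists>G. \<forall>n U. U \<in> \<U> n \<longrightarrow> openin T (G n U) \<and> G n U \<inter> S = U"
proof -
  have lift: "\<exists>G. openin T G \<and> G \<inter> S = U" if "U \<in> \<U> n" for n U
    using assms[OF that] unfolding openin_subtopology by metis
  have "\<forall>n. \<exists>g. \<forall>U. U \<in> \<U> n \<longrightarrow> openin T (g U) \<and> g U \<inter> S = U"
  proof
    fix n
    have "\<forall>U. \<exists>G. U \<in> \<U> n \<longrightarrow> openin T G \<and> G \<inter> S = U"
      using lift by blast
    then show "\<exists>g. \<forall>U. U \<in> \<U> n \<longrightarrow> openin T (g U) \<and> g U \<inter> S = U"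
      by (rule choice)
  qed
  then show ?thesis
    by (rule choice)
qed

lemma Menger_space_subtopology_if_Menger_in:
  assumes M: "Menger_in T S"
  shows "Menger_space (subtopology T S)"
  unfolding Menger_space_def
proof (intro allI impI)
  have top_S: "topspace (subtopology T S) = S"
    using Menger_in_subset[OF M] by (simp add: Int_absorb1)
  fix \<U> :: "nat \<Rightarrow> 'a set set"
  assume cover: "\<forall>n. open_cover (subtopology T S) (\<U> n)"
  have "\<exists>G. \<forall>n U. U \<in> \<U> n \<longrightarrow> openin T (G n U) \<and> G n U \<inter> S = U"
    using cover unfolding open_cover_def by (intro openin_subtopology_seq_lift) blast
  then obtain G where G: "\<And>n U. U \<in> \<U> n \<Longrightarrow> openin T (G n U) \<and> G n U \<inter> S = U"
    by blast
  note G_open = G[THEN conjunct1] and G_trace = G[THEN conjunct2]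
  have "\<exists>\<W>. (\<forall>n. finite (\<W> n) \<and> \<W> n \<subseteq> G n ` \<U> n) \<and> S \<subseteq> (\<Union>n. \<Union>(\<W> n))"
  proof (rule Menger_inD[OF M, where \<U> = "\<lambda>n. G n ` \<U> n"])
    fix n V
    assume "V \<in> G n ` \<U> n"
    then show "openin T V"
      using G_open by blast
  next
    fix n
    show "S \<subseteq> \<Union>(G n ` \<U> n)"
    proof
      fix x assume "x \<in> S"
      then obtain U where "U \<in> \<U> n" "x \<in> U"
        using cover unfolding open_cover_def top_S by blast
      then show "x \<in> \<Union>(G n ` \<U> n)"
        using G_trace[of U n] by blast
    qed
  qed
  then obtain \<W> where \<W>: "\<forall>n. finite (\<W> n) \<and> \<W> n \<subseteq> G n ` \<U> n"
    and cov: "S \<subseteq> (\<Union>n. \<Union>(\<W> n))"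
    by (elim exE conjE)
  obtain \<V> where \<V>: "\<forall>n. \<V> n \<subseteq> \<U> n \<and> finite (\<V> n) \<and> \<W> n = G n ` \<V> n"
    using finite_subset_image_seq[OF \<W>] by blast
  have "(\<Union>n. \<Union>(\<V> n)) = S"
  proof
    show "(\<Union>n. \<Union>(\<V> n)) \<subseteq> S"
    proof
      fix x assume "x \<in> (\<Union>n. \<Union>(\<V> n))"
      then obtain n U where "U \<in> \<V> n" "x \<in> U"
        by blast
      moreover from this have "G n U \<inter> S = U"
        using \<V> G_trace by blast
      ultimately show "x \<in> S"
        by blast
    qed
    show "S \<subseteq> (\<Union>n. \<Union>(\<V> n))"
    proof
      fix x assume "x \<in> S"
      then obtain n W where "W \<in> \<W> n" "x \<in> W"
        using cov by blast
      then obtain U where "U \<in> \<V> n" "x \<in> G n U"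
        using \<V> by blast
      moreover from this have "G n U \<inter> S = U"
        using \<V> G_trace by blast
      ultimately show "x \<in> (\<Union>n. \<Union>(\<V> n))"
        using \<open>x \<in> S\<close> by blast
    qed
  qed
  with \<V> show "\<exists>\<V>. (\<forall>n. finite (\<V> n) \<and> \<V> n \<subseteq> \<U> n) \<and> (\<Union>n. \<Union>(\<V> n)) = topspace (subtopology T S)"
    unfolding top_S by blast
qed

lemma Menger_in_subspace:
  "Menger_in T S \<longleftrightarrow> S \<subseteq> topspace T \<and> Menger_space (subtopology T S)"
proof
  assume "Menger_in T S"
  then show "S \<subseteq> topspace T \<and> Menger_space (subtopology T S)"
    by (simp add: Menger_in_subset Menger_space_subtopology_if_Menger_in)
next
  assume "S \<subseteq> topspace T \<and> Menger_space (subtopology T S)"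
  then show "Menger_in T S"
    by (simp add: Menger_in_if_Menger_space_subtopology)
qed

lemma Menger_in_continuous_map_image:
  assumes M: "Menger_in X S" and f: "continuous_map X Y f"
  shows "Menger_in Y (f ` S)"
  unfolding Menger_in_def
proof (intro conjI allI impI)
  show "f ` S \<subseteq> topspace Y"
    using Menger_in_subset[OF M] continuous_map_image_subset_topspace[OF f] by blast
  fix \<U> :: "nat \<Rightarrow> 'b set set"
  assume \<U>: "\<forall>n. (\<forall>U\<in>\<U> n. openin Y U) \<and> f ` S \<subseteq> \<Union>(\<U> n)"
  define pre where "pre U = {x \<in> topspace X. f x \<in> U}" for U
  have "\<exists>\<W>. (\<forall>n. finite (\<W> n) \<and> \<W> n \<subseteq> pre ` \<U> n) \<and> S \<subseteq> (\<Union>n. \<Union>(\<W> n))"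
  proof (rule Menger_inD[OF M, where \<U> = "\<lambda>n. pre ` \<U> n"])
    fix n V
    assume "V \<in> pre ` \<U> n"
    then obtain U where "U \<in> \<U> n" "V = pre U"
      by blast
    moreover from this have "openin Y U"
      using \<U> by blast
    ultimately show "openin X V"
      unfolding pre_def using openin_continuous_map_preimage[OF f] by blast
  next
    fix n
    show "S \<subseteq> \<Union>(pre ` \<U> n)"
    proof
      fix x assume "x \<in> S"
      then obtain U where "U \<in> \<U> n" "f x \<in> U"
        using \<U> by blast
      moreover have "x \<in> topspace X"
        using Menger_in_subset[OF M] \<open>x \<in> S\<close> by blast
      ultimately show "x \<in> \<Union>(pre ` \<U> n)"
        unfolding pre_def by blast
    qed
  qed
  then obtain \<W> where \<W>: "\<forall>n. finite (\<W> n) \<and> \<W> n \<subseteq> pre ` \<U> n"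
    and cov: "S \<subseteq> (\<Union>n. \<Union>(\<W> n))"
    by (elim exE conjE)
  obtain \<V> where \<V>: "\<forall>n. \<V> n \<subseteq> \<U> n \<and> finite (\<V> n) \<and> \<W> n = pre ` \<V> n"
    using finite_subset_image_seq[OF \<W>] by blast
  have "f ` S \<subseteq> (\<Union>n. \<Union>(\<V> n))"
  proof
    fix y assume "y \<in> f ` S"
    then obtain x where "x \<in> S" "y = f x"
      by blast
    then obtain n W where "W \<in> \<W> n" "x \<in> W"
      using cov by blast
    then obtain U where "U \<in> \<V> n" "x \<in> pre U"
      using \<V> by blast
    then show "y \<in> (\<Union>n. \<Union>(\<V> n))"
      using \<open>y = f x\<close> unfolding pre_def by blast
  qed
  with \<V> show "\<exists>\<V>. (\<forall>n. finite (\<V> n) \<and> \<V> n \<subseteq> \<U> n) \<and> f ` S \<subseteq> (\<Union>n. \<Union>(\<V> n))"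
    by blast
qed

text \<open>The sequence of covers is split along the pairing bijection into countably many
  subsequences, one for each member of the union.\<close>

lemma Menger_in_countable_Union:
  assumes "countable \<M>" and M: "\<And>M. M \<in> \<M> \<Longrightarrow> Menger_in T M"
  shows "Menger_in T (\<Union>\<M>)"
proof (cases "\<M> = {}")
  case True
  then show ?thesis
    unfolding Menger_in_def by (auto intro: exI[of _ "\<lambda>n. {}"])
next
  case False
  define h where "h = from_nat_into \<M>"
  have h_in: "h k \<in> \<M>" for k
    using False unfolding h_def by (rule from_nat_into)
  show ?thesis
    unfolding Menger_in_def
  proof (intro conjI allI impI)
    show "\<Union>\<M> \<subseteq> topspace T"
      using M Menger_in_subset by blast
    fix \<U> :: "nat \<Rightarrow> 'a set set"
    assume \<U>: "\<forall>n. (\<forall>U\<in>\<U> n. openin T U) \<and> \<Union>\<M> \<subseteq> \<Union>(\<U> n)"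
    have "\<exists>W. (\<forall>m. finite (W m) \<and> W m \<subseteq> \<U> (prod_encode (k, m))) \<and> h k \<subseteq> (\<Union>m. \<Union>(W m))"
      for k
    proof (rule Menger_inD[where \<U> = "\<lambda>m. \<U> (prod_encode (k, m))"])
      show "Menger_in T (h k)"
        using M h_in by blast
      show "\<And>m U. U \<in> \<U> (prod_encode (k, m)) \<Longrightarrow> openin T U"
        using \<U> by blast
      show "\<And>m. h k \<subseteq> \<Union>(\<U> (prod_encode (k, m)))"
        using \<U> h_in by blast
    qed
    then obtain W where W: "\<And>k. \<forall>m. finite (W k m) \<and> W k m \<subseteq> \<U> (prod_encode (k, m))"
      and cov: "\<And>k. h k \<subseteq> (\<Union>m. \<Union>(W k m))"
      by metis
    define \<V> where "\<V> n = case_prod W (prod_decode n)" for n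
    have \<V>_encode: "\<V> (prod_encode (k, m)) = W k m" for k m
      unfolding \<V>_def by simp
    have "finite (\<V> n) \<and> \<V> n \<subseteq> \<U> n" for n
    proof -
      obtain k m where "n = prod_encode (k, m)"
        by (metis prod_decode_inverse surj_pair)
      then show ?thesis
        using W \<V>_encode by simp
    qed
    moreover have "\<Union>\<M> \<subseteq> (\<Union>n. \<Union>(\<V> n))"
    proof
      fix x assume "x \<in> \<Union>\<M>"
      then obtain M where "M \<in> \<M>" "x \<in> M"
        by blast
      moreover obtain k where "h k = M"
        using from_nat_into_surj[OF assms(1) \<open>M \<in> \<M>\<close>] unfolding h_def by blast
      ultimately obtain m where "x \<in> \<Union>(W k m)"
        using cov by blast
      then have "x \<in> \<Union>(\<V> (prod_encode (k, m)))"
        by (simp only: \<V>_encode)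
      then show "x \<in> (\<Union>n. \<Union>(\<V> n))"
        by blast
    qed
    ultimately show "\<exists>\<V>. (\<forall>n. finite (\<V> n) \<and> \<V> n \<subseteq> \<U> n) \<and> \<Union>\<M> \<subseteq> (\<Union>n. \<Union>(\<V> n))"
      by blast
  qed
qed

lemma locally_Menger_alt:
  "locally_Menger X \<longleftrightarrow>
     (\<forall>x\<in>topspace X. \<exists>U K. openin X U \<and> Menger_in X K \<and> x \<in> U \<and> U \<subseteq> K)"
  unfolding locally_Menger_def Menger_in_subspace by blast

lemma locally_Menger_image:
  assumes f: "continuous_map X Y f" and X: "locally_Menger X"
    and fibre_cover: "\<And>y \<U>. \<lbrakk>y \<in> topspace Y; \<forall>U\<in>\<U>. openin X U; {x \<in> topspace X. f x = y} \<subseteq> \<Union>\<U>\<rbrakk>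
      \<Longrightarrow> \<exists>\<C> V. countable \<C> \<and> \<C> \<subseteq> \<U> \<and> openin Y V \<and> y \<in> V \<and> V \<subseteq> f ` \<Union>\<C>"
  shows "locally_Menger Y"
  unfolding locally_Menger_alt
proof
  fix y
  assume y: "y \<in> topspace Y"
  have "\<forall>x. \<exists>U K. x \<in> topspace X \<longrightarrow> openin X U \<and> Menger_in X K \<and> x \<in> U \<and> U \<subseteq> K"
    using X unfolding locally_Menger_alt by blast
  then obtain U K where UK: "\<And>x. x \<in> topspace X \<Longrightarrow>
      openin X (U x) \<and> Menger_in X (K x) \<and> x \<in> U x \<and> U x \<subseteq> K x"
    by metis
  have "\<forall>W\<in>U ` topspace X. openin X W" "{x \<in> topspace X. f x = y} \<subseteq> \<Union>(U ` topspace X)"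
    using UK by blast+
  then have "\<exists>\<C> V. countable \<C> \<and> \<C> \<subseteq> U ` topspace X \<and> openin Y V \<and> y \<in> V \<and> V \<subseteq> f ` \<Union>\<C>"
    by (rule fibre_cover[OF y])
  then obtain \<C> V where \<C>: "countable \<C>" "\<C> \<subseteq> U ` topspace X"
    and V: "openin Y V" "y \<in> V" "V \<subseteq> f ` \<Union>\<C>"
    by (elim exE conjE)
  obtain L where L: "countable L" "L \<subseteq> topspace X" "\<C> = U ` L"
    using countable_subset_image[THEN iffD1, OF conjI[OF \<C>]] by blast
  have "Menger_in Y (\<Union>x\<in>L. f ` K x)"
  proof (rule Menger_in_countable_Union)
    show "countable ((\<lambda>x. f ` K x) ` L)"
      using L(1) by blast
    fix M
    assume "M \<in> (\<lambda>x. f ` K x) ` L"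
    then obtain x where "x \<in> L" "M = f ` K x"
      by blast
    moreover from this have "Menger_in X (K x)"
      using UK L(2) by blast
    ultimately show "Menger_in Y M"
      using Menger_in_continuous_map_image[OF _ f] by blast
  qed
  moreover have "V \<subseteq> (\<Union>x\<in>L. f ` K x)"
  proof
    fix v
    assume "v \<in> V"
    then obtain x a where "x \<in> L" "a \<in> U x" "v = f a"
      using V(3) unfolding L(3) by blast
    moreover from this have "a \<in> K x"
      using UK L(2) by blast
    ultimately show "v \<in> (\<Union>x\<in>L. f ` K x)"
      by blast
  qed
  ultimately show "\<exists>U K. openin Y U \<and> Menger_in Y K \<and> y \<in> U \<and> U \<subseteq> K"
    using V(1,2) by blast
qed

lemma weakly_perfect_map_countable_fibre_cover:
  assumes f: "weakly_perfect_map X Y f" and y: "y \<in> topspace Y"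
    and \<U>: "\<forall>U\<in>\<U>. openin X U" "{x \<in> topspace X. f x = y} \<subseteq> \<Union>\<U>"
  shows "\<exists>\<C> V. countable \<C> \<and> \<C> \<subseteq> \<U> \<and> openin Y V \<and> y \<in> V \<and> V \<subseteq> f ` \<Union>\<C>"
proof -
  let ?F = "{x \<in> topspace X. f x = y}"
  have "Lindelof_space (subtopology X ?F)"
    using f y unfolding weakly_perfect_map_def by blast
  then have "\<exists>\<C>. countable \<C> \<and> \<C> \<subseteq> \<U> \<and> topspace X \<inter> ?F \<subseteq> \<Union>\<C>"
    unfolding Lindelof_space_subtopology using \<U> by blast
  then obtain \<C> where \<C>: "countable \<C>" "\<C> \<subseteq> \<U>" "?F \<subseteq> \<Union>\<C>"
    by blast
  have "openin X (\<Union>\<C>)"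
    using \<C>(2) \<U>(1) by (intro openin_Union) blast
  moreover have "closed_map X Y f"
    using f unfolding weakly_perfect_map_def by blast
  ultimately have "\<exists>V. openin Y V \<and> y \<in> V \<and> {x \<in> topspace X. f x \<in> V} \<subseteq> \<Union>\<C>"
    using y \<C>(3) unfolding closed_map_fibre_neighbourhood by blast
  then obtain V where V: "openin Y V" "y \<in> V" "{x \<in> topspace X. f x \<in> V} \<subseteq> \<Union>\<C>"
    by blast
  have "V \<subseteq> f ` topspace X"
    using openin_subset[OF V(1)] f unfolding weakly_perfect_map_def by blast
  with V(3) have "V \<subseteq> f ` \<Union>\<C>"
    by blast
  with \<C> V show ?thesis
    by blast
qed

lemma biquotient_map_finite_fibre_cover:
  assumes f: "biquotient_map X Y f" and y: "y \<in> topspace Y"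
    and \<U>: "\<forall>U\<in>\<U>. openin X U" "{x \<in> topspace X. f x = y} \<subseteq> \<Union>\<U>"
  shows "\<exists>\<C> V. finite \<C> \<and> \<C> \<subseteq> \<U> \<and> openin Y V \<and> y \<in> V \<and> V \<subseteq> f ` \<Union>\<C>"
proof -
  have "\<forall>y\<in>topspace Y. \<forall>\<U>. (\<forall>U\<in>\<U>. openin X U) \<and> {x \<in> topspace X. f x = y} \<subseteq> \<Union>\<U> \<longrightarrow>
      (\<exists>\<C> V. finite \<C> \<and> \<C> \<subseteq> \<U> \<and> openin Y V \<and> y \<in> V \<and> V \<subseteq> (\<Union>U\<in>\<C>. f ` U))"
    using f unfolding biquotient_map_def by (elim conjE)
  then have "\<forall>\<U>. (\<forall>U\<in>\<U>. openin X U) \<and> {x \<in> topspace X. f x = y} \<subseteq> \<Union>\<U> \<longrightarrow>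
      (\<exists>\<C> V. finite \<C> \<and> \<C> \<subseteq> \<U> \<and> openin Y V \<and> y \<in> V \<and> V \<subseteq> (\<Union>U\<in>\<C>. f ` U))"
    using y by (rule bspec)
  from mp[OF spec[OF this, of \<U>] conjI[OF \<U>]] show ?thesis
    unfolding image_Union .
qed

theorem theorem4p1:
  fixes X :: "'a topology" and Y :: "'b topology" and f :: "'a \<Rightarrow> 'b"
  assumes "continuous_map X Y f"
    and "f ` topspace X = topspace Y"
    and "locally_Menger X"
    and "weakly_perfect_map X Y f \<or> biquotient_map X Y f"
  shows "locally_Menger Y"
proof (rule locally_Menger_image[OF assms(1,3)])
  fix y \<U>
  assume y: "y \<in> topspace Y" and \<U>: "\<forall>U\<in>\<U>. openin X U" "{x \<in> topspace X. f x = y} \<subseteq> \<Union>\<U>"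
  from assms(4) show "\<exists>\<C> V. countable \<C> \<and> \<C> \<subseteq> \<U> \<and> openin Y V \<and> y \<in> V \<and> V \<subseteq> f ` \<Union>\<C>"
  proof
    assume "weakly_perfect_map X Y f"
    then show ?thesis
      using y \<U> by (rule weakly_perfect_map_countable_fibre_cover)
  next
    assume "biquotient_map X Y f"
    from biquotient_map_finite_fibre_cover[OF this y \<U>] obtain \<C> V
      where "finite \<C>" "\<C> \<subseteq> \<U>" "openin Y V" "y \<in> V" "V \<subseteq> f ` \<Union>\<C>"
      by blast
    then have "countable \<C> \<and> \<C> \<subseteq> \<U> \<and> openin Y V \<and> y \<in> V \<and> V \<subseteq> f ` \<Union>\<C>"
      by (simp add: countable_finite)
    then show ?thesis
      by blast
  qed
qed

end
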